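(* In the setting below, the cokernel $A/\rho(G)$ of $\rho\colon G\to A$ is abelian.
   Context: Let $G$ be a group generated by $a_1,\dots,a_n$ with $z=a_1\cdots a_n$ central. Let $S_1,\dots,S_m\subseteq\{1,\dots,n\}$ with $|S_i\cap S_r|\le1$ for $i\neq r$. For $S\subseteq\{1,\dots,n\}$ let $G_S$ be the quotient of $G$ by the normal closure of $\{a_j:j\notin S\}$; let $a_{ij}$ be the image of $a_j$ in $G_{S_i}$ and $z_i=a_{i1}\cdots a_{in}$ (central in $G_{S_i}$). Assume each $G_{S_i}/\langle z_i\rangle$ is free of rank $|S_i|-1$, the images of any $|S_i|-1$ of the $a_{ij}$, $j\in S_i$, forming a free basis. Let $A=\prod_{i=1}^mG_{S_i}$ and $\rho\colon G\to A$ the product of the projections; $\rho(G)$ is normal in $A$. *)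

theory Defs
  imports "HOL-Algebra.Algebra"
begin

definition gprod :: "('a, 'b) monoid_scheme \<Rightarrow> 'a list \<Rightarrow> 'a" where
  "gprod G xs = foldr (\<lambda>x y. x \<otimes>\<^bsub>G\<^esub> y) xs \<one>\<^bsub>G\<^esub>"

definition normal_closure :: "('a, 'b) monoid_scheme \<Rightarrow> 'a set \<Rightarrow> 'a set" where
  "normal_closure G T =
     generate G (\<Union>g\<in>carrier G. (\<lambda>x. monoid.mult G (monoid.mult G g x) (m_inv G g)) ` T)"

definition kill_kernel :: "('a, 'b) monoid_scheme \<Rightarrow> (nat \<Rightarrow> 'a) \<Rightarrow> nat \<Rightarrow> nat set \<Rightarrow> 'a set" where
  "kill_kernel G a n S = normal_closure G (a ` ({1..n} - S))"

definition quot_S :: "('a, 'b) monoid_scheme \<Rightarrow> (nat \<Rightarrow> 'a) \<Rightarrow> nat \<Rightarrow> nat set \<Rightarrow> 'a set monoid" where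
  "quot_S G a n S = G Mod (kill_kernel G a n S)"

definition proj_S :: "('a, 'b) monoid_scheme \<Rightarrow> (nat \<Rightarrow> 'a) \<Rightarrow> nat \<Rightarrow> nat set \<Rightarrow> 'a \<Rightarrow> 'a set" where
  "proj_S G a n S g = kill_kernel G a n S #>\<^bsub>G\<^esub> g"

text \<open>Words in the letters x_j^{+1} (True) and x_j^{-1} (False), j in I.\<close>
definition word_eval :: "('a, 'b) monoid_scheme \<Rightarrow> ('i \<Rightarrow> 'a) \<Rightarrow> ('i \<times> bool) list \<Rightarrow> 'a" where
  "word_eval H f w = gprod H (map (\<lambda>(j, e). if e then f j else m_inv H (f j)) w)"

definition reduced_word :: "('i \<times> bool) list \<Rightarrow> bool" where
  "reduced_word w \<longleftrightarrow>
     (\<forall>k. Suc k < length w \<longrightarrow> \<not> (fst (w ! k) = fst (w ! Suc k) \<and> snd (w ! k) \<noteq> snd (w ! Suc k)))"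

text \<open>The family (f j)_{j in I} is a free basis of the group H: it generates H and
  no nonempty reduced word in it evaluates to the identity (so in particular f is
  injective on I and H is free of rank card I).\<close>
definition free_basis :: "('a, 'b) monoid_scheme \<Rightarrow> ('i \<Rightarrow> 'a) \<Rightarrow> 'i set \<Rightarrow> bool" where
  "free_basis H f I \<longleftrightarrow>
     f ` I \<subseteq> carrier H \<and>
     generate H (f ` I) = carrier H \<and>
     (\<forall>w. w \<noteq> [] \<longrightarrow> set (map fst w) \<subseteq> I \<longrightarrow> reduced_word w \<longrightarrow> word_eval H f w \<noteq> \<one>\<^bsub>H\<^esub>)"

end

theory Submission
  imports Defs
begin

(* Let \<rho> = (\<pi>_i)_i : G \<rightarrow> A = \<Prod>_i G_{S_i}. It suffices that \<rho>(G) contains the commutator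
   subgroup [A, A]; then \<rho>(G) is automatically normal and A/\<rho>(G) abelian. As A is a finite
   product, it is enough that for each i the set D_i of elements of G_{S_i} whose embedding into
   the i-th coordinate lies in \<rho>(G) contains [G_{S_i}, G_{S_i}]. Since \<pi>_i is onto, D_i is normal,
   so it suffices that D_i contains the commutators of the generators \<pi>_i(a_j). Now
   \<pi>_r[a_j, a_k] = 1 unless j, k \<in> S_r, and for j \<noteq> k this happens for at most one r because
   |S_i \<inter> S_r| \<le> 1; hence \<rho>[a_j, a_k] is concentrated in a single coordinate. *)

lemma (in group) centraliser_subgroup:
  assumes "x \<in> carrier G"
  shows "subgroup {u \<in> carrier G. u \<otimes> x = x \<otimes> u} G"
proof (rule subgroupI)
  fix u assume "u \<in> {u \<in> carrier G. u \<otimes> x = x \<otimes> u}"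
  then have u: "u \<in> carrier G" and ux: "u \<otimes> x = x \<otimes> u" by auto
  have "inv u \<otimes> x = inv u \<otimes> (x \<otimes> u) \<otimes> inv u"
    using u assms by (simp add: m_assoc)
  also have "\<dots> = x \<otimes> inv u"
    using u assms by (simp add: ux[symmetric] m_assoc[symmetric])
  finally show "inv u \<in> {u \<in> carrier G. u \<otimes> x = x \<otimes> u}" using u by simp
next
  fix u w assume "u \<in> {u \<in> carrier G. u \<otimes> x = x \<otimes> u}" "w \<in> {u \<in> carrier G. u \<otimes> x = x \<otimes> u}"
  then show "u \<otimes> w \<in> {u \<in> carrier G. u \<otimes> x = x \<otimes> u}"
    using assms by (auto simp: m_assoc) (simp add: m_assoc[symmetric])
qed (use assms in auto)

lemma (in group) comm_group_if_generators_commute: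
  assumes gs: "gs \<subseteq> carrier G" and gen: "generate G gs = carrier G"
    and comm: "\<And>x y. x \<in> gs \<Longrightarrow> y \<in> gs \<Longrightarrow> x \<otimes> y = y \<otimes> x"
  shows "comm_group G"
proof -
  have centralises: "u \<otimes> x = x \<otimes> u"
    if x: "x \<in> carrier G" and gs_x: "\<And>y. y \<in> gs \<Longrightarrow> y \<otimes> x = x \<otimes> y"
      and u: "u \<in> carrier G" for x u
  proof -
    have "gs \<subseteq> {u \<in> carrier G. u \<otimes> x = x \<otimes> u}" using gs gs_x by auto
    from generate_subgroup_incl[OF this centraliser_subgroup[OF x]] show ?thesis
      using u by (simp add: gen subset_iff)
  qed
  have "y \<otimes> x = x \<otimes> y" if "x \<in> carrier G" "y \<in> gs" for x y
    using centralises[of y x] that gs comm by (metis subsetD)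
  then show ?thesis
    using centralises by (intro group_comm_groupI) metis
qed

lemma (in normal) FactGroup_commute_iff:
  assumes x: "x \<in> carrier G" and y: "y \<in> carrier G"
  shows "(H #> x) \<otimes>\<^bsub>G Mod H\<^esub> (H #> y) = (H #> y) \<otimes>\<^bsub>G Mod H\<^esub> (H #> x)
     \<longleftrightarrow> x \<otimes> y \<otimes> inv x \<otimes> inv y \<in> H"
proof -
  have "(H #> x) \<otimes>\<^bsub>G Mod H\<^esub> (H #> y) = (H #> y) \<otimes>\<^bsub>G Mod H\<^esub> (H #> x)
     \<longleftrightarrow> H #> (x \<otimes> y) = H #> (y \<otimes> x)"
    using x y by (simp add: rcos_sum)
  also have "\<dots> \<longleftrightarrow> x \<otimes> y \<in> H #> (y \<otimes> x)"
    using x y rcos_self[OF _ subgroup_axioms] repr_independence[OF _ _ subgroup_axioms] by blast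
  also have "\<dots> \<longleftrightarrow> (x \<otimes> y) \<otimes> inv (y \<otimes> x) \<in> H"
    using x y by (simp add: rcos_module[OF is_group])
  also have "(x \<otimes> y) \<otimes> inv (y \<otimes> x) = x \<otimes> y \<otimes> inv x \<otimes> inv y"
    using x y by (simp add: inv_mult_group m_assoc)
  finally show ?thesis .
qed

lemma (in group) commutator_in_derived:
  assumes "x \<in> K" "y \<in> K"
  shows "x \<otimes> y \<otimes> inv x \<otimes> inv y \<in> derived G K"
  unfolding derived_def by (rule generate.incl) (use assms in blast)

lemma (in normal) comm_group_FactGroup_iff_derived:
  "comm_group (G Mod H) \<longleftrightarrow> derived G (carrier G) \<subseteq> H"
proof
  assume der: "derived G (carrier G) \<subseteq> H"
  have comm: "x \<otimes> y \<otimes> inv x \<otimes> inv y \<in> H" if "x \<in> carrier G" "y \<in> carrier G" for x y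
    using that der commutator_in_derived by blast
  show "comm_group (G Mod H)"
  proof (rule group.group_comm_groupI[OF factorgroup_is_group])
    fix U V assume "U \<in> carrier (G Mod H)" "V \<in> carrier (G Mod H)"
    then obtain x y where xy: "x \<in> carrier G" "y \<in> carrier G" and UV: "U = H #> x" "V = H #> y"
      unfolding carrier_FactGroup by blast
    show "U \<otimes>\<^bsub>G Mod H\<^esub> V = V \<otimes>\<^bsub>G Mod H\<^esub> U"
      unfolding UV using FactGroup_commute_iff[OF xy] comm[OF xy] by blast
  qed
qed (rule derived_minimal[OF normal_axioms])

lemma (in group) normal_if_derived_subset:
  assumes H: "subgroup H G" and der: "derived G (carrier G) \<subseteq> H"
  shows "H \<lhd> G"
proof (rule normal_invI[OF H])
  fix x h assume x: "x \<in> carrier G" and h: "h \<in> H"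
  then have hc: "h \<in> carrier G" using subgroup.subset[OF H] by blast
  have "x \<otimes> h \<otimes> inv x \<otimes> inv h \<in> H"
    using der commutator_in_derived x hc by blast
  then have "x \<otimes> h \<otimes> inv x \<otimes> inv h \<otimes> h \<in> H"
    using h subgroup.m_closed[OF H] by blast
  then show "x \<otimes> h \<otimes> inv x \<in> H"
    using x hc by (simp add: m_assoc)
qed

lemma (in normal) derived_subset_if_generators:
  assumes gs: "gs \<subseteq> carrier G" and gen: "generate G gs = carrier G"
    and der: "derived_set G gs \<subseteq> H"
  shows "derived G (carrier G) \<subseteq> H"
proof -
  interpret Q: group "G Mod H" by (rule factorgroup_is_group)
  interpret pi: group_hom G "G Mod H" "\<lambda>x. H #> x"
    by unfold_locales (rule r_coset_hom_Mod)
  have "(\<lambda>x. H #> x) ` gs \<subseteq> carrier (G Mod H)"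
    using gs pi.hom_closed by blast
  moreover have "generate (G Mod H) ((\<lambda>x. H #> x) ` gs) = carrier (G Mod H)"
    by (simp add: pi.generate_img[OF gs] gen carrier_FactGroup)
  moreover have "u \<otimes>\<^bsub>G Mod H\<^esub> v = v \<otimes>\<^bsub>G Mod H\<^esub> u"
    if uv_gen: "u \<in> (\<lambda>x. H #> x) ` gs" "v \<in> (\<lambda>x. H #> x) ` gs" for u v
  proof -
    obtain x y where xy: "x \<in> gs" "y \<in> gs" and uv: "u = H #> x" "v = H #> y"
      using uv_gen by blast
    have "x \<otimes> y \<otimes> inv x \<otimes> inv y \<in> H"
      using xy der by blast
    then show ?thesis
      unfolding uv using FactGroup_commute_iff[of x y] xy gs by blast
  qed
  ultimately have "comm_group (G Mod H)"
    by (rule Q.comm_group_if_generators_commute)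
  then show ?thesis
    by (simp only: comm_group_FactGroup_iff_derived)
qed

definition single_factor :: "'i set \<Rightarrow> ('i \<Rightarrow> ('a, 'b) monoid_scheme) \<Rightarrow> 'i \<Rightarrow> 'a \<Rightarrow> 'i \<Rightarrow> 'a"
  where "single_factor I Q i q = (\<lambda>k\<in>I. if k = i then q else \<one>\<^bsub>Q k\<^esub>)"

lemma group_hom_single_factor:
  assumes grp: "\<And>k. k \<in> I \<Longrightarrow> group (Q k)" and i: "i \<in> I"
  shows "group_hom (Q i) (product_group I Q) (single_factor I Q i)"
proof (intro group_hom.intro group_hom_axioms.intro grp[OF i] product_group homI)
  fix q assume "q \<in> carrier (Q i)"
  then show "single_factor I Q i q \<in> carrier (product_group I Q)"
    using grp by (auto simp: single_factor_def group.is_monoid)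
next
  fix q r assume "q \<in> carrier (Q i)" "r \<in> carrier (Q i)"
  then show "single_factor I Q i (q \<otimes>\<^bsub>Q i\<^esub> r)
      = single_factor I Q i q \<otimes>\<^bsub>product_group I Q\<^esub> single_factor I Q i r"
    using grp i by (auto simp: single_factor_def group.is_monoid intro!: restrict_ext)
qed (rule grp)

lemma mem_subgroup_if_single_factors:
  assumes fin: "finite I" and grp: "\<And>k. k \<in> I \<Longrightarrow> group (Q k)"
    and H: "subgroup H (product_group I Q)" and x: "x \<in> carrier (product_group I Q)"
    and single: "\<And>i. i \<in> I \<Longrightarrow> single_factor I Q i (x i) \<in> H"
  shows "x \<in> H"
proof -
  let ?P = "product_group I Q"
  define part where "part J = (\<lambda>k\<in>I. if k \<in> J then x k else \<one>\<^bsub>Q k\<^esub>)" for J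
  have "part J \<in> H" if "J \<subseteq> I" for J
    using finite_subset[OF that fin] that
  proof (induction J)
    case empty
    have "part {} = \<one>\<^bsub>?P\<^esub>" by (simp add: part_def)
    with subgroup.one_closed[OF H] show ?case by (simp only:)
  next
    case (insert j J)
    have "part (insert j J) = single_factor I Q j (x j) \<otimes>\<^bsub>?P\<^esub> part J"
      using insert.hyps(2) insert.prems x grp
      by (auto simp: part_def single_factor_def PiE_iff group.is_monoid intro!: restrict_ext)
    moreover have "single_factor I Q j (x j) \<otimes>\<^bsub>?P\<^esub> part J \<in> H"
      using subgroup.m_closed[OF H single insert.IH] insert.prems by blast
    ultimately show ?case by (simp only:)
  qed
  moreover have "part I = x"
    using x by (simp add: part_def PiE_iff extensional_restrict cong: restrict_cong)
  ultimately show ?thesis by auto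
qed

lemma normal_single_factor_vimage:
  assumes grp: "\<And>k. k \<in> I \<Longrightarrow> group (Q k)" and i: "i \<in> I"
    and H: "subgroup H (product_group I Q)"
    and onto: "\<And>q. q \<in> carrier (Q i) \<Longrightarrow> \<exists>h\<in>H. h i = q"
  shows "{q \<in> carrier (Q i). single_factor I Q i q \<in> H} \<lhd> Q i"
proof -
  let ?P = "product_group I Q" and ?s = "single_factor I Q i"
  interpret s: group_hom "Q i" ?P ?s by (rule group_hom_single_factor[OF grp i])
  interpret H: subgroup H ?P by (rule H)
  show ?thesis
  proof (rule s.G.normal_invI)
    show "subgroup {q \<in> carrier (Q i). ?s q \<in> H} (Q i)"
    proof (rule s.G.subgroupI)
      have "?s \<one>\<^bsub>Q i\<^esub> \<in> H" by (simp only: s.hom_one H.one_closed)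
      then show "{q \<in> carrier (Q i). ?s q \<in> H} \<noteq> {}" by blast
    next
      fix q assume q: "q \<in> {q \<in> carrier (Q i). ?s q \<in> H}"
      then have "?s (inv\<^bsub>Q i\<^esub> q) \<in> H" by (simp add: H.m_inv_closed)
      with q show "inv\<^bsub>Q i\<^esub> q \<in> {q \<in> carrier (Q i). ?s q \<in> H}" by simp
    next
      fix q r assume q: "q \<in> {q \<in> carrier (Q i). ?s q \<in> H}" and r: "r \<in> {q \<in> carrier (Q i). ?s q \<in> H}"
      then have "?s (q \<otimes>\<^bsub>Q i\<^esub> r) = ?s q \<otimes>\<^bsub>?P\<^esub> ?s r" by (intro s.hom_mult) auto
      then have "?s (q \<otimes>\<^bsub>Q i\<^esub> r) \<in> H" using q r H.m_closed by simp
      with q r show "q \<otimes>\<^bsub>Q i\<^esub> r \<in> {q \<in> carrier (Q i). ?s q \<in> H}" by simp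
    qed blast
  next
    fix x q assume x: "x \<in> carrier (Q i)" and q: "q \<in> {q \<in> carrier (Q i). ?s q \<in> H}"
    obtain h where h: "h \<in> H" "h i = x" using onto[OF x] by blast
    have hP: "h \<in> (\<Pi>\<^sub>E k\<in>I. carrier (Q k))" using H.subset h(1) by auto
    have "h \<otimes>\<^bsub>?P\<^esub> ?s q \<otimes>\<^bsub>?P\<^esub> inv\<^bsub>?P\<^esub> h
        = (\<lambda>k\<in>I. h k \<otimes>\<^bsub>Q k\<^esub> ?s q k \<otimes>\<^bsub>Q k\<^esub> inv\<^bsub>Q k\<^esub> h k)"
      using hP grp by (simp cong: restrict_cong)
    also have "\<dots> = ?s (x \<otimes>\<^bsub>Q i\<^esub> q \<otimes>\<^bsub>Q i\<^esub> inv\<^bsub>Q i\<^esub> x)"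
      unfolding single_factor_def[of I Q i "x \<otimes>\<^bsub>Q i\<^esub> q \<otimes>\<^bsub>Q i\<^esub> inv\<^bsub>Q i\<^esub> x"]
    proof (rule restrict_ext)
      fix k assume k: "k \<in> I"
      interpret Qk: group "Q k" by (rule grp[OF k])
      show "h k \<otimes>\<^bsub>Q k\<^esub> ?s q k \<otimes>\<^bsub>Q k\<^esub> inv\<^bsub>Q k\<^esub> h k
          = (if k = i then x \<otimes>\<^bsub>Q i\<^esub> q \<otimes>\<^bsub>Q i\<^esub> inv\<^bsub>Q i\<^esub> x else \<one>\<^bsub>Q k\<^esub>)"
        using k hP h(2) by (auto simp: single_factor_def PiE_iff)
    qed
    finally have conj: "h \<otimes>\<^bsub>?P\<^esub> ?s q \<otimes>\<^bsub>?P\<^esub> inv\<^bsub>?P\<^esub> h = ?s (x \<otimes>\<^bsub>Q i\<^esub> q \<otimes>\<^bsub>Q i\<^esub> inv\<^bsub>Q i\<^esub> x)" .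
    have "h \<otimes>\<^bsub>?P\<^esub> ?s q \<otimes>\<^bsub>?P\<^esub> inv\<^bsub>?P\<^esub> h \<in> H"
      using h(1) q by blast
    then show "x \<otimes>\<^bsub>Q i\<^esub> q \<otimes>\<^bsub>Q i\<^esub> inv\<^bsub>Q i\<^esub> x \<in> {q \<in> carrier (Q i). ?s q \<in> H}"
      using x q by (simp add: conj[symmetric])
  qed
qed

lemma derived_product_group_subset:
  assumes fin: "finite I" and grp: "\<And>k. k \<in> I \<Longrightarrow> group (Q k)"
    and H: "subgroup H (product_group I Q)"
    and factors: "\<And>i. i \<in> I \<Longrightarrow>
       derived (Q i) (carrier (Q i)) \<subseteq> {q \<in> carrier (Q i). single_factor I Q i q \<in> H}"
  shows "derived (product_group I Q) (carrier (product_group I Q)) \<subseteq> H"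
proof -
  let ?P = "product_group I Q"
  interpret P: group ?P using grp by simp
  have comm: "x \<otimes>\<^bsub>?P\<^esub> y \<otimes>\<^bsub>?P\<^esub> inv\<^bsub>?P\<^esub> x \<otimes>\<^bsub>?P\<^esub> inv\<^bsub>?P\<^esub> y \<in> H"
    if x: "x \<in> carrier ?P" and y: "y \<in> carrier ?P" for x y
  proof (rule mem_subgroup_if_single_factors[OF fin grp H])
    show "x \<otimes>\<^bsub>?P\<^esub> y \<otimes>\<^bsub>?P\<^esub> inv\<^bsub>?P\<^esub> x \<otimes>\<^bsub>?P\<^esub> inv\<^bsub>?P\<^esub> y \<in> carrier ?P"
      using x y by (intro P.m_closed P.inv_closed)
  next
    fix i assume i: "i \<in> I"
    interpret Qi: group "Q i" by (rule grp[OF i])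
    have xy: "x i \<in> carrier (Q i)" "y i \<in> carrier (Q i)" using x y i by auto
    have "(x \<otimes>\<^bsub>?P\<^esub> y \<otimes>\<^bsub>?P\<^esub> inv\<^bsub>?P\<^esub> x \<otimes>\<^bsub>?P\<^esub> inv\<^bsub>?P\<^esub> y) i
        = x i \<otimes>\<^bsub>Q i\<^esub> y i \<otimes>\<^bsub>Q i\<^esub> inv\<^bsub>Q i\<^esub> x i \<otimes>\<^bsub>Q i\<^esub> inv\<^bsub>Q i\<^esub> y i"
      using x y i grp by simp
    moreover have "x i \<otimes>\<^bsub>Q i\<^esub> y i \<otimes>\<^bsub>Q i\<^esub> inv\<^bsub>Q i\<^esub> x i \<otimes>\<^bsub>Q i\<^esub> inv\<^bsub>Q i\<^esub> y i
        \<in> derived (Q i) (carrier (Q i))"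
      using Qi.commutator_in_derived[OF xy] .
    ultimately show "single_factor I Q i ((x \<otimes>\<^bsub>?P\<^esub> y \<otimes>\<^bsub>?P\<^esub> inv\<^bsub>?P\<^esub> x \<otimes>\<^bsub>?P\<^esub> inv\<^bsub>?P\<^esub> y) i) \<in> H"
      using factors[OF i] by auto
  qed
  show ?thesis
    unfolding derived_def by (rule P.generate_subgroup_incl[OF _ H]) (blast intro: comm)
qed

locale factor_surjections = G: group G
  for G :: "('a, 'b) monoid_scheme" and I :: "'i set"
    and Q :: "'i \<Rightarrow> ('c, 'd) monoid_scheme" and \<pi> :: "'i \<Rightarrow> 'a \<Rightarrow> 'c" +
  assumes factor_group: "i \<in> I \<Longrightarrow> group (Q i)"
    and factor_hom: "i \<in> I \<Longrightarrow> \<pi> i \<in> hom G (Q i)"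
    and factor_onto: "i \<in> I \<Longrightarrow> \<pi> i ` carrier G = carrier (Q i)"
begin

abbreviation diagonal :: "'a \<Rightarrow> 'i \<Rightarrow> 'c"
  where "diagonal g \<equiv> \<lambda>i\<in>I. \<pi> i g"

sublocale P: group "product_group I Q"
  using factor_group by simp

lemma diagonal_group_hom: "group_hom G (product_group I Q) diagonal"
proof (intro group_hom.intro group_hom_axioms.intro G.group_axioms P.group_axioms homI)
  fix g assume "g \<in> carrier G"
  then show "diagonal g \<in> carrier (product_group I Q)"
    using factor_hom by (auto simp: hom_def)
next
  fix g h assume "g \<in> carrier G" "h \<in> carrier G"
  then show "diagonal (g \<otimes>\<^bsub>G\<^esub> h) = diagonal g \<otimes>\<^bsub>product_group I Q\<^esub> diagonal h"
    using factor_hom by (auto simp: hom_mult intro!: restrict_ext)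
qed

lemma subgroup_diagonal_image: "subgroup (diagonal ` carrier G) (product_group I Q)"
  using group_hom.img_is_subgroup[OF diagonal_group_hom] .

lemma normal_single_factor_vimage_diagonal:
  assumes i: "i \<in> I"
  shows "{q \<in> carrier (Q i). single_factor I Q i q \<in> diagonal ` carrier G} \<lhd> Q i"
proof (rule normal_single_factor_vimage)
  show "group (Q k)" if "k \<in> I" for k using that by (rule factor_group)
  show "i \<in> I" by (fact i)
  show "subgroup (diagonal ` carrier G) (product_group I Q)" by (rule subgroup_diagonal_image)
next
  fix q assume "q \<in> carrier (Q i)"
  then obtain g where "g \<in> carrier G" "q = \<pi> i g" using factor_onto[OF i] by blast
  then show "\<exists>h\<in>diagonal ` carrier G. h i = q" using i by force
qed

end

locale sparse_commutators = factor_surjections +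
  fixes gs :: "'a set"
  assumes gens: "gs \<subseteq> carrier G" and generate_gens: "generate G gs = carrier G"
    and sparse: "\<lbrakk>x \<in> gs; y \<in> gs; i \<in> I; r \<in> I; i \<noteq> r\<rbrakk> \<Longrightarrow>
       \<pi> i (x \<otimes>\<^bsub>G\<^esub> y \<otimes>\<^bsub>G\<^esub> inv\<^bsub>G\<^esub> x \<otimes>\<^bsub>G\<^esub> inv\<^bsub>G\<^esub> y) = \<one>\<^bsub>Q i\<^esub>
       \<or> \<pi> r (x \<otimes>\<^bsub>G\<^esub> y \<otimes>\<^bsub>G\<^esub> inv\<^bsub>G\<^esub> x \<otimes>\<^bsub>G\<^esub> inv\<^bsub>G\<^esub> y) = \<one>\<^bsub>Q r\<^esub>"
begin

lemma derived_factor_subset_single_factor_vimage: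
  assumes i: "i \<in> I"
  shows "derived (Q i) (carrier (Q i))
     \<subseteq> {q \<in> carrier (Q i). single_factor I Q i q \<in> diagonal ` carrier G}"
    (is "_ \<subseteq> ?D")
proof -
  interpret \<pi>: group_hom G "Q i" "\<pi> i"
    by (intro group_hom.intro group_hom_axioms.intro G.group_axioms factor_group[OF i] factor_hom[OF i])
  interpret D: normal ?D "Q i" by (rule normal_single_factor_vimage_diagonal[OF i])
  show ?thesis
  proof (rule D.derived_subset_if_generators)
    show "\<pi> i ` gs \<subseteq> carrier (Q i)" using gens by (blast intro: \<pi>.hom_closed)
    show "generate (Q i) (\<pi> i ` gs) = carrier (Q i)"
      by (simp only: \<pi>.generate_img[OF gens] generate_gens factor_onto[OF i])
    show "derived_set (Q i) (\<pi> i ` gs) \<subseteq> ?D"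
    proof
      fix c assume "c \<in> derived_set (Q i) (\<pi> i ` gs)"
      then obtain x y where xy: "x \<in> gs" "y \<in> gs"
        and c: "c = \<pi> i x \<otimes>\<^bsub>Q i\<^esub> \<pi> i y \<otimes>\<^bsub>Q i\<^esub> inv\<^bsub>Q i\<^esub> \<pi> i x \<otimes>\<^bsub>Q i\<^esub> inv\<^bsub>Q i\<^esub> \<pi> i y"
        by blast
      define k where "k = x \<otimes>\<^bsub>G\<^esub> y \<otimes>\<^bsub>G\<^esub> inv\<^bsub>G\<^esub> x \<otimes>\<^bsub>G\<^esub> inv\<^bsub>G\<^esub> y"
      have xy_carrier: "x \<in> carrier G" "y \<in> carrier G" using xy gens by blast+
      then have k: "k \<in> carrier G" unfolding k_def by (intro G.m_closed G.inv_closed)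
      have ck: "c = \<pi> i k" using xy_carrier unfolding c k_def by simp
      show "c \<in> ?D"
      proof (cases "\<pi> i k = \<one>\<^bsub>Q i\<^esub>")
        case True
        then show ?thesis using ck D.one_closed by (simp only:)
      next
        case False
        have "diagonal k = single_factor I Q i (\<pi> i k)"
          unfolding single_factor_def
        proof (rule restrict_ext)
          fix r assume "r \<in> I"
          then show "\<pi> r k = (if r = i then \<pi> i k else \<one>\<^bsub>Q r\<^esub>)"
            using sparse[OF xy i] False unfolding k_def by auto
        qed
        then have "single_factor I Q i (\<pi> i k) \<in> diagonal ` carrier G" using k by (metis image_eqI)
        then show ?thesis using ck k by (blast intro: \<pi>.hom_closed)
      qed
    qed
  qed
qed

theorem comm_group_Mod_diagonal_image:
  assumes "finite I"
  shows "comm_group (product_group I Q Mod diagonal ` carrier G)"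
proof -
  have derived: "derived (product_group I Q) (carrier (product_group I Q)) \<subseteq> diagonal ` carrier G"
  proof (rule derived_product_group_subset)
    show "group (Q k)" if "k \<in> I" for k using that by (rule factor_group)
    show "derived (Q i) (carrier (Q i))
        \<subseteq> {q \<in> carrier (Q i). single_factor I Q i q \<in> diagonal ` carrier G}" if "i \<in> I" for i
      using that by (rule derived_factor_subset_single_factor_vimage)
  qed (fact assms subgroup_diagonal_image)+
  interpret H: normal "diagonal ` carrier G" "product_group I Q"
    by (rule P.normal_if_derived_subset[OF subgroup_diagonal_image derived])
  show ?thesis using derived by (simp only: H.comm_group_FactGroup_iff_derived)
qed

end

lemma (in group_hom) hom_commutator_eq_one:
  assumes "x \<in> carrier G" "y \<in> carrier G" and "h x = \<one>\<^bsub>H\<^esub> \<or> h y = \<one>\<^bsub>H\<^esub> \<or> x = y"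
  shows "h (x \<otimes> y \<otimes> inv x \<otimes> inv y) = \<one>\<^bsub>H\<^esub>"
proof (cases "x = y")
  case True
  have "x \<otimes> x \<otimes> inv x = x" using assms(1) by (simp add: G.m_assoc)
  then show ?thesis using True assms(1) by simp
next
  case False
  with assms(3) have "h x = \<one>\<^bsub>H\<^esub> \<or> h y = \<one>\<^bsub>H\<^esub>" by blast
  then show ?thesis using assms(1,2) by (elim disjE) simp_all
qed

lemma normal_closure_normal:
  assumes G: "group G" and T: "T \<subseteq> carrier G"
  shows "normal_closure G T \<lhd> G"
  unfolding normal_closure_def
proof (rule group.normal_generateI[OF G])
  interpret G: group G by (rule G)
  show "(\<Union>g\<in>carrier G. (\<lambda>x. g \<otimes>\<^bsub>G\<^esub> x \<otimes>\<^bsub>G\<^esub> inv\<^bsub>G\<^esub> g) ` T) \<subseteq> carrier G"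
    using T by auto
  fix h g assume h: "h \<in> (\<Union>g\<in>carrier G. (\<lambda>x. g \<otimes>\<^bsub>G\<^esub> x \<otimes>\<^bsub>G\<^esub> inv\<^bsub>G\<^esub> g) ` T)"
    and g: "g \<in> carrier G"
  then obtain g' x where g': "g' \<in> carrier G" and x: "x \<in> T"
    and hx: "h = g' \<otimes>\<^bsub>G\<^esub> x \<otimes>\<^bsub>G\<^esub> inv\<^bsub>G\<^esub> g'"
    by blast
  have "g \<otimes>\<^bsub>G\<^esub> h \<otimes>\<^bsub>G\<^esub> inv\<^bsub>G\<^esub> g = (g \<otimes>\<^bsub>G\<^esub> g') \<otimes>\<^bsub>G\<^esub> x \<otimes>\<^bsub>G\<^esub> inv\<^bsub>G\<^esub> (g \<otimes>\<^bsub>G\<^esub> g')"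
    using g g' x T by (auto simp: hx G.m_assoc G.inv_mult_group)
  then show "g \<otimes>\<^bsub>G\<^esub> h \<otimes>\<^bsub>G\<^esub> inv\<^bsub>G\<^esub> g \<in> (\<Union>g\<in>carrier G. (\<lambda>x. g \<otimes>\<^bsub>G\<^esub> x \<otimes>\<^bsub>G\<^esub> inv\<^bsub>G\<^esub> g) ` T)"
    using g g' x by blast
qed

lemma subset_normal_closure:
  assumes G: "group G" and T: "T \<subseteq> carrier G"
  shows "T \<subseteq> normal_closure G T"
proof
  interpret G: group G by (rule G)
  fix x assume x: "x \<in> T"
  then have "x = \<one>\<^bsub>G\<^esub> \<otimes>\<^bsub>G\<^esub> x \<otimes>\<^bsub>G\<^esub> inv\<^bsub>G\<^esub> \<one>\<^bsub>G\<^esub>"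
    using T by auto
  with x have "x \<in> (\<Union>g\<in>carrier G. (\<lambda>x. g \<otimes>\<^bsub>G\<^esub> x \<otimes>\<^bsub>G\<^esub> inv\<^bsub>G\<^esub> g) ` T)"
    by blast
  then show "x \<in> normal_closure G T"
    unfolding normal_closure_def by (rule generate.incl)
qed

lemma kill_kernel_normal:
  assumes G: "group G" and a: "a ` {1..n} \<subseteq> carrier G"
  shows "kill_kernel G a n S \<lhd> G"
proof -
  have "a ` ({1..n} - S) \<subseteq> carrier G" using a by blast
  then show ?thesis unfolding kill_kernel_def by (rule normal_closure_normal[OF G])
qed

lemma group_hom_proj_S:
  assumes G: "group G" and a: "a ` {1..n} \<subseteq> carrier G"
  shows "group_hom G (quot_S G a n S) (proj_S G a n S)"
proof -
  interpret N: normal "kill_kernel G a n S" G by (rule kill_kernel_normal[OF G a])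
  show ?thesis
    unfolding quot_S_def proj_S_def
    by (intro group_hom.intro group_hom_axioms.intro G N.factorgroup_is_group N.r_coset_hom_Mod)
qed

lemma proj_S_eq_one:
  assumes G: "group G" and a: "a ` {1..n} \<subseteq> carrier G" and j: "j \<in> {1..n}" "j \<notin> S"
  shows "proj_S G a n S (a j) = \<one>\<^bsub>quot_S G a n S\<^esub>"
proof -
  interpret N: normal "kill_kernel G a n S" G by (rule kill_kernel_normal[OF G a])
  have T: "a ` ({1..n} - S) \<subseteq> carrier G" using a by blast
  have "a j \<in> a ` ({1..n} - S)" using j by blast
  then have "a j \<in> kill_kernel G a n S"
    unfolding kill_kernel_def using subset_normal_closure[OF G T] by (rule subsetD[rotated])
  then show ?thesis
    unfolding proj_S_def quot_S_def by (simp add: N.rcos_const[OF G])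
qed

lemma proj_S_commutator_eq_one:
  assumes G: "group G" and a: "a ` {1..n} \<subseteq> carrier G" and jk: "j \<in> {1..n}" "k \<in> {1..n}"
    and "\<not> {j, k} \<subseteq> S \<or> j = k"
  shows "proj_S G a n S (a j \<otimes>\<^bsub>G\<^esub> a k \<otimes>\<^bsub>G\<^esub> inv\<^bsub>G\<^esub> a j \<otimes>\<^bsub>G\<^esub> inv\<^bsub>G\<^esub> a k)
    = \<one>\<^bsub>quot_S G a n S\<^esub>"
  using group_hom.hom_commutator_eq_one[OF group_hom_proj_S[OF G a]] assms proj_S_eq_one[OF G a]
  by blast

lemma factor_surjections_proj_S:
  assumes G: "group G" and a: "a ` {1..n} \<subseteq> carrier G"
  shows "factor_surjections G I (\<lambda>i. quot_S G a n (S i)) (\<lambda>i. proj_S G a n (S i))"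
proof (intro factor_surjections.intro factor_surjections_axioms.intro G)
  fix i
  interpret \<pi>: group_hom G "quot_S G a n (S i)" "proj_S G a n (S i)"
    by (rule group_hom_proj_S[OF G a])
  show "group (quot_S G a n (S i))" by (rule \<pi>.H.group_axioms)
  show "proj_S G a n (S i) \<in> hom G (quot_S G a n (S i))" by (rule \<pi>.homh)
  show "proj_S G a n (S i) ` carrier G = carrier (quot_S G a n (S i))"
    by (simp add: quot_S_def proj_S_def carrier_FactGroup)
qed

theorem mainTheorem13:
  fixes G :: "('a, 'b) monoid_scheme"
    and a :: "nat \<Rightarrow> 'a"
    and n m :: nat
    and S :: "nat \<Rightarrow> nat set"
  assumes grp: "group G"
    and a_in: "a ` {1..n} \<subseteq> carrier G"
    and gen: "generate G (a ` {1..n}) = carrier G"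
    and z_central: "\<forall>g\<in>carrier G.
                      g \<otimes>\<^bsub>G\<^esub> gprod G (map a [1..<Suc n]) = gprod G (map a [1..<Suc n]) \<otimes>\<^bsub>G\<^esub> g"
    and S_sub: "\<forall>i\<in>{1..m}. S i \<subseteq> {1..n}"
    and S_ne: "\<forall>i\<in>{1..m}. S i \<noteq> {}"
    and S_inter: "\<forall>i\<in>{1..m}. \<forall>r\<in>{1..m}. i \<noteq> r \<longrightarrow> card (S i \<inter> S r) \<le> 1"
    and free: "\<forall>i\<in>{1..m}. \<forall>j0\<in>S i.
       free_basis
         (quot_S G a n (S i) Mod
            generate (quot_S G a n (S i)) {gprod (quot_S G a n (S i)) (map (\<lambda>j. proj_S G a n (S i) (a j)) [1..<Suc n])})
         (\<lambda>j. generate (quot_S G a n (S i)) {gprod (quot_S G a n (S i)) (map (\<lambda>j. proj_S G a n (S i) (a j)) [1..<Suc n])}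
                #>\<^bsub>quot_S G a n (S i)\<^esub> proj_S G a n (S i) (a j))
         (S i - {j0})"
  shows "comm_group
           (product_group {1..m} (\<lambda>i. quot_S G a n (S i))
              Mod ((\<lambda>g. \<lambda>i\<in>{1..m}. proj_S G a n (S i) g) ` carrier G))"
proof -
  let ?Q = "\<lambda>i. quot_S G a n (S i)" and ?\<pi> = "\<lambda>i. proj_S G a n (S i)"
  interpret factor_surjections G "{1..m}" ?Q ?\<pi>
    by (rule factor_surjections_proj_S[OF grp a_in])
  interpret sparse_commutators G "{1..m}" ?Q ?\<pi> "a ` {1..n}"
  proof
    fix x y i r assume "x \<in> a ` {1..n}" "y \<in> a ` {1..n}" and ir: "i \<in> {1..m}" "r \<in> {1..m}" "i \<noteq> r"
    then obtain j k where jk: "j \<in> {1..n}" "k \<in> {1..n}" and xy: "x = a j" "y = a k" by blast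
    have "finite (S i \<inter> S r)" using S_sub ir(1) by (meson finite_Int finite_atLeastAtMost finite_subset)
    moreover have "card (S i \<inter> S r) \<le> Suc 0" using S_inter ir by simp
    ultimately have "\<forall>u\<in>S i \<inter> S r. \<forall>v\<in>S i \<inter> S r. u = v" by (simp only: card_le_Suc0_iff_eq)
    then have "\<not> {j, k} \<subseteq> S i \<or> \<not> {j, k} \<subseteq> S r \<or> j = k" by blast
    then show "?\<pi> i (x \<otimes>\<^bsub>G\<^esub> y \<otimes>\<^bsub>G\<^esub> inv\<^bsub>G\<^esub> x \<otimes>\<^bsub>G\<^esub> inv\<^bsub>G\<^esub> y) = \<one>\<^bsub>?Q i\<^esub>
      \<or> ?\<pi> r (x \<otimes>\<^bsub>G\<^esub> y \<otimes>\<^bsub>G\<^esub> inv\<^bsub>G\<^esub> x \<otimes>\<^bsub>G\<^esub> inv\<^bsub>G\<^esub> y) = \<one>\<^bsub>?Q r\<^esub>"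
      unfolding xy using proj_S_commutator_eq_one[OF grp a_in jk] by blast
  qed (fact a_in gen)+
  show ?thesis by (rule comm_group_Mod_diagonal_image) simp
qed

end
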